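(* Fix a round $t$ and a nonempty set $\bm{S}_t$ of scheduled devices. For device $k$, let the local computation latency be $\mathcal{T}_k^{\rm L}=\tau D_kC_k/(f_kn_k)$ and computation energy $E_{k}^{\rm L}=\kappa\tau D_kC_kf_k^2/n_k$. Given bandwidth fraction $\theta_{k,t}\in[0,1]$ and transmit power $p_{k,t}$, the upload latency is $\mathcal{T}_{k,t}^{\rm U}=\frac{Qq}{\theta_{k,t}B\log_2(1+\frac{p_{k,t}h_{k,t}}{\theta_{k,t}BN_0})}$ and the upload energy is $E_{k,t}^{\rm U}=p_{k,t}\mathcal{T}_{k,t}^{\rm U}=\frac{\theta_{k,t}B\mathcal{T}_{k,t}^{\rm U}N_0}{h_{k,t}}\big(2^{\frac{Qq}{\theta_{k,t}B\mathcal{T}_{k,t}^{\rm U}}}-1\big)$; let $E_{k,t}=E_k^{\rm L}+E_{k,t}^{\rm U}$. Consider the problem $$\mathcal{P}_1:\ \min_{\bm{\theta}_t,\bm{p}_t}\ \sum_{k\in\bm{S}_t}q_k(t)E_{k,t}\quad\text{s.t. } \mathcal{T}_k^{\rm L}+\mathcal{T}_{k,t}^{\rm U}\le\mathcal{T}_{\max}\ \forall k,\ \ \sum_{k=1}^K\theta_{k,t}\le1,\ \ 0\le\theta_{k,t}\le1\ \forall k.$$ Then the optimal solution of $\mathcal{P}_1$ satisfies $\mathcal{T}_{k,t}^{\rm U}=\mathcal{T}_{\max}-\mathcal{T}_k^{\rm L}$, and the optimal transmit power of device $k$ satisfies $$p_{k,t}=\frac{\theta_{k,t}BN_0}{h_{k,t}}\Big(2^{\frac{Qq}{(\mathcal{T}_{\max}-\mathcal{T}_k^{\rm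 L})\theta_{k,t}B}}-1\Big).$$
   Context: Parameters: $\tau$ local iterations, $D_k$ number of local samples, $C_k$ FLOPs per sample, $f_k$ CPU frequency, $n_k$ FLOPs per cycle, $\kappa$ power coefficient, $B$ total bandwidth (Hz), $h_{k,t}>0$ channel gain, $N_0$ noise power spectral density, $Q$ number of uploaded parameters and $q$ bits per parameter, $\mathcal{T}_{\max}$ the per-round deadline, and $q_k(t)\ge0$ a virtual energy queue of device $k$ (weights). *)

theory Defs
  imports Complex_Main
begin

definition T_L :: "real \<Rightarrow> real \<Rightarrow> real \<Rightarrow> real \<Rightarrow> real \<Rightarrow> real" where
  "T_L tau Dk Ck fk nk = tau * Dk * Ck / (fk * nk)"

definition E_L :: "real \<Rightarrow> real \<Rightarrow> real \<Rightarrow> real \<Rightarrow> real \<Rightarrow> real \<Rightarrow> real" where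
  "E_L kappa tau Dk Ck fk nk = kappa * tau * Dk * Ck * fk ^ 2 / nk"

definition T_U :: "real \<Rightarrow> real \<Rightarrow> real \<Rightarrow> real \<Rightarrow> real \<Rightarrow> real \<Rightarrow> real \<Rightarrow> real" where
  "T_U Q qb B N0 hk th pk = Q * qb / (th * B * log 2 (1 + pk * hk / (th * B * N0)))"

definition E_U :: "real \<Rightarrow> real \<Rightarrow> real \<Rightarrow> real \<Rightarrow> real \<Rightarrow> real \<Rightarrow> real \<Rightarrow> real" where
  "E_U Q qb B N0 hk th pk = pk * T_U Q qb B N0 hk th pk"

text \<open>Feasible set of problem P1 (devices 1..K, scheduled set S).
  Bandwidth fractions and powers of scheduled devices must be positive so that
  the upload latency is well defined (finite).\<close>
definition P1_feasible ::
  "nat \<Rightarrow> nat set \<Rightarrow> real \<Rightarrow> (nat \<Rightarrow> real) \<Rightarrow> (nat \<Rightarrow> real) \<Rightarrow> (nat \<Rightarrow> real) \<Rightarrow> (nat \<Rightarrow> real)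
   \<Rightarrow> real \<Rightarrow> real \<Rightarrow> real \<Rightarrow> real \<Rightarrow> (nat \<Rightarrow> real) \<Rightarrow> real
   \<Rightarrow> (nat \<Rightarrow> real) \<Rightarrow> (nat \<Rightarrow> real) \<Rightarrow> bool" where
  "P1_feasible K S tau D C f n Q qb B N0 h Tmax theta p \<longleftrightarrow>
     (\<forall>k\<in>{1..K}. 0 \<le> theta k \<and> theta k \<le> 1) \<and>
     (\<Sum>k=1..K. theta k) \<le> 1 \<and>
     (\<forall>k\<in>S. 0 < theta k \<and> 0 < p k \<and>
        T_L tau (D k) (C k) (f k) (n k) + T_U Q qb B N0 (h k) (theta k) (p k) \<le> Tmax)"

definition P1_obj ::
  "nat set \<Rightarrow> (nat \<Rightarrow> real) \<Rightarrow> real \<Rightarrow> real \<Rightarrow> (nat \<Rightarrow> real) \<Rightarrow> (nat \<Rightarrow> real) \<Rightarrow> (nat \<Rightarrow> real)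
   \<Rightarrow> (nat \<Rightarrow> real) \<Rightarrow> real \<Rightarrow> real \<Rightarrow> real \<Rightarrow> real \<Rightarrow> (nat \<Rightarrow> real)
   \<Rightarrow> (nat \<Rightarrow> real) \<Rightarrow> (nat \<Rightarrow> real) \<Rightarrow> real" where
  "P1_obj S qk kappa tau D C f n Q qb B N0 h theta p =
     (\<Sum>k\<in>S. qk k * (E_L kappa tau (D k) (C k) (f k) (n k) + E_U Q qb B N0 (h k) (theta k) (p k)))"

end

theory Submission
  imports Defs
begin

text \<open>For a fixed bandwidth share, both the upload latency and the upload energy depend on the
  power only through the SNR \<open>x = p h / (\<theta> B N\<^sub>0)\<close>: the latency is
  \<open>Q q / (\<theta> B log\<^sub>2 (1 + x))\<close>, decreasing in \<open>x\<close>, while the energy is a positive constant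
  times \<open>x / ln (1 + x)\<close>, increasing in \<open>x\<close>. Hence if a device with positive queue weight met
  its deadline with slack, lowering its power until the deadline is met exactly would keep the
  allocation feasible and strictly decrease the objective. So the deadline is tight at an
  optimum, and inverting the Shannon rate at that latency gives the power.\<close>

lemma div_ln_add_one_strict_mono:
  fixes x y :: real
  assumes "0 < y" "y < x"
  shows "y / ln (1 + y) < x / ln (1 + x)"
proof -
  have "ln (1 + x) / x < ln (1 + y) / y"
  proof (rule DERIV_neg_imp_decreasing[where f = "\<lambda>t. ln (1 + t) / t"])
    show "y < x" by fact
    fix t :: real
    assume "y \<le> t" "t \<le> x"
    then have t: "0 < t" using assms by linarith
    have "DERIV (\<lambda>t. ln (1 + t) / t) t :> (t / (1 + t) - ln (1 + t)) / (t * t)"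
      using t by (auto intro!: derivative_eq_intros)
    moreover have "t / (1 + t) < ln (1 + t)"
      using ln_add1_gt[OF t] by (simp add: add.commute)
    then have "(t / (1 + t) - ln (1 + t)) / (t * t) < 0"
      using t by (simp add: divide_neg_pos)
    ultimately show "\<exists>z. DERIV (\<lambda>t. ln (1 + t) / t) t :> z \<and> z < 0" by blast
  qed
  moreover have "0 < ln (1 + y)" "0 < ln (1 + x)" using assms by auto
  ultimately show ?thesis using assms by (simp add: field_simps)
qed

definition power_for_latency :: "real \<Rightarrow> real \<Rightarrow> real \<Rightarrow> real \<Rightarrow> real \<Rightarrow> real \<Rightarrow> real \<Rightarrow> real" where
  "power_for_latency Q qb B N0 hk th T = th * B * N0 / hk * (2 powr (Q * qb / (T * th * B)) - 1)"

context
  fixes Q qb B N0 hk th :: real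
  assumes pos: "0 < Q" "0 < qb" "0 < B" "0 < N0" "0 < hk" "0 < th"
begin

lemma snr_pos:
  assumes "0 < p"
  shows "0 < p * hk / (th * B * N0)"
  using assms pos by simp

lemma T_U_pos:
  assumes "0 < p"
  shows "0 < T_U Q qb B N0 hk th p"
  using snr_pos[OF assms] pos by (simp add: T_U_def)

lemma T_U_strict_antimono:
  assumes "0 < p'" "p' < p"
  shows "T_U Q qb B N0 hk th p < T_U Q qb B N0 hk th p'"
proof -
  have "p' * hk / (th * B * N0) < p * hk / (th * B * N0)"
    using assms pos by (simp add: divide_strict_right_mono)
  then have "0 < log 2 (1 + p' * hk / (th * B * N0))"
    "log 2 (1 + p' * hk / (th * B * N0)) < log 2 (1 + p * hk / (th * B * N0))"
    using snr_pos[OF assms(1)] by simp_all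
  then show ?thesis
    using pos by (simp add: T_U_def divide_strict_left_mono mult_strict_left_mono)
qed

lemma E_U_strict_mono:
  assumes "0 < p'" "p' < p"
  shows "E_U Q qb B N0 hk th p' < E_U Q qb B N0 hk th p"
proof -
  have snr: "E_U Q qb B N0 hk th p =
      N0 * Q * qb * ln 2 / hk * ((p * hk / (th * B * N0)) / ln (1 + p * hk / (th * B * N0)))"
    if "0 < p" for p
    using pos that by (simp add: E_U_def T_U_def log_def field_simps)
  have "p' * hk / (th * B * N0) < p * hk / (th * B * N0)"
    using assms pos by (simp add: divide_strict_right_mono)
  from div_ln_add_one_strict_mono[OF snr_pos[OF assms(1)] this]
  have "N0 * Q * qb * ln 2 / hk * ((p' * hk / (th * B * N0)) / ln (1 + p' * hk / (th * B * N0)))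
      < N0 * Q * qb * ln 2 / hk * ((p * hk / (th * B * N0)) / ln (1 + p * hk / (th * B * N0)))"
    by (rule mult_strict_left_mono) (simp add: pos)
  then show ?thesis
    using assms by (simp only: snr)
qed

lemma power_for_latency_pos:
  assumes "0 < T"
  shows "0 < power_for_latency Q qb B N0 hk th T"
  using assms pos by (simp add: power_for_latency_def)

lemma T_U_power_for_latency:
  assumes "0 < T"
  shows "T_U Q qb B N0 hk th (power_for_latency Q qb B N0 hk th T) = T"
proof -
  have "power_for_latency Q qb B N0 hk th T * hk / (th * B * N0) = 2 powr (Q * qb / (T * th * B)) - 1"
    using pos by (simp add: power_for_latency_def field_simps)
  then show ?thesis
    using assms pos by (simp add: T_U_def)
qed

lemma power_for_latency_unique:
  assumes "0 < p" "T_U Q qb B N0 hk th p = T"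
  shows "p = power_for_latency Q qb B N0 hk th T"
proof -
  define x where "x = p * hk / (th * B * N0)"
  have "0 < log 2 (1 + x)" using snr_pos[OF assms(1)] by (simp add: x_def)
  moreover have "T = Q * qb / (th * B * log 2 (1 + x))"
    using assms by (simp add: T_U_def x_def)
  moreover have "0 < T" using T_U_pos[OF assms(1)] assms(2) by simp
  ultimately have "Q * qb / (T * th * B) = log 2 (1 + x)"
    using pos by (simp add: field_simps)
  moreover have "2 powr log 2 (1 + x) = 1 + x"
    using snr_pos[OF assms(1)] by (simp add: x_def add_pos_pos)
  ultimately show ?thesis
    using pos by (simp add: power_for_latency_def x_def field_simps)
qed

lemma power_for_latency_less:
  assumes "0 < p" "T_U Q qb B N0 hk th p < T"
  shows "power_for_latency Q qb B N0 hk th T < p"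
proof (rule ccontr)
  define pT where "pT = power_for_latency Q qb B N0 hk th T"
  have "0 < T" using T_U_pos[OF assms(1)] assms(2) by simp
  assume "\<not> power_for_latency Q qb B N0 hk th T < p"
  then consider "p = pT" | "p < pT" unfolding pT_def by linarith
  then have "T_U Q qb B N0 hk th pT \<le> T_U Q qb B N0 hk th p"
    by cases (auto intro: less_imp_le T_U_strict_antimono[OF assms(1)])
  with assms(2) show False
    using T_U_power_for_latency[OF \<open>0 < T\<close>] by (simp add: pT_def)
qed

end

lemma P1_feasible_update_power:
  assumes "P1_feasible K S tau D C f n Q qb B N0 h Tmax theta p" "0 < p'"
    and "T_L tau (D k) (C k) (f k) (n k) + T_U Q qb B N0 (h k) (theta k) p' \<le> Tmax"
  shows "P1_feasible K S tau D C f n Q qb B N0 h Tmax theta (p(k := p'))"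
  using assms by (auto simp: P1_feasible_def)

lemma P1_obj_update_power_less:
  assumes "finite S" "k \<in> S" "0 < qk k"
    and "E_U Q qb B N0 (h k) (theta k) p' < E_U Q qb B N0 (h k) (theta k) (p k)"
  shows "P1_obj S qk kappa tau D C f n Q qb B N0 h theta (p(k := p'))
       < P1_obj S qk kappa tau D C f n Q qb B N0 h theta p"
proof -
  define cost where "cost p j = qk j * (E_L kappa tau (D j) (C j) (f j) (n j)
      + E_U Q qb B N0 (h j) (theta j) (p j))" for p :: "nat \<Rightarrow> real" and j
  have split: "P1_obj S qk kappa tau D C f n Q qb B N0 h theta p = cost p k + sum (cost p) (S - {k})"
    for p
    unfolding P1_obj_def cost_def by (rule sum.remove[OF assms(1,2)])
  have "sum (cost (p(k := p'))) (S - {k}) = sum (cost p) (S - {k})"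
    by (rule sum.cong) (simp_all add: cost_def)
  moreover have "cost (p(k := p')) k < cost p k"
    using assms(3,4) by (simp add: cost_def)
  ultimately show ?thesis by (simp add: split)
qed

lemma P1_optimal_latency_tight:
  assumes "finite S" "k \<in> S" "0 < qk k"
    and "0 < Q" "0 < qb" "0 < B" "0 < N0" "0 < h k"
    and feas: "P1_feasible K S tau D C f n Q qb B N0 h Tmax theta p"
    and opt: "\<And>p'. P1_feasible K S tau D C f n Q qb B N0 h Tmax theta p' \<Longrightarrow>
               P1_obj S qk kappa tau D C f n Q qb B N0 h theta p
                 \<le> P1_obj S qk kappa tau D C f n Q qb B N0 h theta p'"
  shows "T_U Q qb B N0 (h k) (theta k) (p k) = Tmax - T_L tau (D k) (C k) (f k) (n k)"
    (is "?latency = ?T")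
proof (rule ccontr)
  have pk: "0 < theta k" "0 < p k" and "?latency \<le> ?T"
    using feas \<open>k \<in> S\<close> by (auto simp: P1_feasible_def)
  note chan_pos = assms(4-8) pk(1)
  assume "?latency \<noteq> ?T"
  with \<open>?latency \<le> ?T\<close> have slack: "?latency < ?T" by simp
  then have "0 < ?T" using T_U_pos[OF chan_pos pk(2)] by simp
  define p' where "p' = power_for_latency Q qb B N0 (h k) (theta k) ?T"
  have "0 < p'" "p' < p k"
    using power_for_latency_pos[OF chan_pos \<open>0 < ?T\<close>] power_for_latency_less[OF chan_pos pk(2) slack]
    by (simp_all add: p'_def)
  have "P1_feasible K S tau D C f n Q qb B N0 h Tmax theta (p(k := p'))"
    using feas \<open>0 < p'\<close> T_U_power_for_latency[OF chan_pos \<open>0 < ?T\<close>]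
    by (intro P1_feasible_update_power) (simp_all add: p'_def)
  moreover have "P1_obj S qk kappa tau D C f n Q qb B N0 h theta (p(k := p'))
      < P1_obj S qk kappa tau D C f n Q qb B N0 h theta p"
    using assms(1-3) E_U_strict_mono[OF chan_pos \<open>0 < p'\<close> \<open>p' < p k\<close>]
    by (rule P1_obj_update_power_less)
  ultimately show False using opt by fastforce
qed

theorem proposition1:
  fixes K :: nat and S :: "nat set"
    and tau kappa Q qb B N0 Tmax :: real
    and D C f n h qk :: "nat \<Rightarrow> real"
    and theta p :: "nat \<Rightarrow> real"
  assumes S_sub: "S \<subseteq> {1..K}" and S_ne: "S \<noteq> {}"
    and pos: "0 < tau" "0 < kappa" "0 < Q" "0 < qb" "0 < B" "0 < N0"
    and dev_pos: "\<And>k. k \<in> {1..K} \<Longrightarrow> 0 < D k \<and> 0 < C k \<and> 0 < f k \<and> 0 < n k \<and> 0 < h k"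
    and q_nonneg: "\<And>k. k \<in> {1..K} \<Longrightarrow> 0 \<le> qk k"
    and feas: "P1_feasible K S tau D C f n Q qb B N0 h Tmax theta p"
    and opt: "\<And>theta' p'. P1_feasible K S tau D C f n Q qb B N0 h Tmax theta' p' \<Longrightarrow>
               P1_obj S qk kappa tau D C f n Q qb B N0 h theta p
                 \<le> P1_obj S qk kappa tau D C f n Q qb B N0 h theta' p'"
  shows "\<forall>k\<in>S. 0 < qk k \<longrightarrow>
           T_U Q qb B N0 (h k) (theta k) (p k) = Tmax - T_L tau (D k) (C k) (f k) (n k) \<and>
           p k = theta k * B * N0 / h k *
                 (2 powr (Q * qb / ((Tmax - T_L tau (D k) (C k) (f k) (n k)) * theta k * B)) - 1)"
proof (intro ballI impI)
  fix k
  assume k: "k \<in> S" and "0 < qk k"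
  have "0 < h k" using dev_pos k S_sub by blast
  have "0 < theta k" "0 < p k"
    using feas k by (auto simp: P1_feasible_def)
  have tight: "T_U Q qb B N0 (h k) (theta k) (p k) = Tmax - T_L tau (D k) (C k) (f k) (n k)"
    using finite_subset[OF S_sub finite_atLeastAtMost] k \<open>0 < qk k\<close> pos(3-6) \<open>0 < h k\<close> feas opt
    by (rule P1_optimal_latency_tight)
  moreover have "p k = power_for_latency Q qb B N0 (h k) (theta k) (Tmax - T_L tau (D k) (C k) (f k) (n k))"
    using pos(3-6) \<open>0 < h k\<close> \<open>0 < theta k\<close> \<open>0 < p k\<close> tight by (rule power_for_latency_unique)
  ultimately show "T_U Q qb B N0 (h k) (theta k) (p k) = Tmax - T_L tau (D k) (C k) (f k) (n k) \<and>
      p k = theta k * B * N0 / h k *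
        (2 powr (Q * qb / ((Tmax - T_L tau (D k) (C k) (f k) (n k)) * theta k * B)) - 1)"
    unfolding power_for_latency_def by blast
qed

end
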